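(* Suppose Assumption A holds with constant $d$, and let $r>0$. Then there exists $\epsilon_o\in(0,1)$ (depending only on $\mathfrak a$ and $\lambda$) such that for all $\epsilon\in(0,\epsilon_o)$, $$\sup_{\theta^\circ\in\Theta^r_{\mathfrak a}}\mathbb E_{\theta^\circ}\|\hat\theta^{m^*_\epsilon}-\theta^\circ\|^2\le(2+r/d^2)(1\vee r)\,\Phi^*_\epsilon .$$
   Context: Let $\ell^2$ be the space of square-summable real sequences with norm $\|\cdot\|$. Fix a bounded real sequence $\lambda=(\lambda_j)_{j\ge1}$ with $\lambda_j\ne0$ for all $j$ and a noise level $\epsilon\in(0,1)$. For a parameter $\theta^\circ$ the data $Y=(Y_j)_{j\ge1}$ satisfy $Y_j=\lambda_j\theta^\circ_j+\sqrt\epsilon\,\xi_j$ with $\xi_j$ i.i.d. $N(0,1)$; $\mathbb E_{\theta^\circ}$ denotes expectation under this law. Fix prior means $\eta=(\eta_j)_{j\ge1}$ and prior variances $\tau_j\in(0,\infty)$ (possibly depending on $\epsilon$). For $m\in\mathbb N$ the sieve prior is the law of $\vartheta^m$ with independent coordinates, $\vartheta^m_j\sim N(\eta_j,\tau_j)$ for $j\le m$ and $\vartheta^m_j=\eta_j$ a.s. for $j>m$, in the model $Y_j=\lambda_j\vartheta^m_j+\sqrt\epsilon\xi_j$. Put $\sigma_j:=(\lambda_j^2\epsilon^{-1}+\tau_j^{-1})^{-1}$ and $\theta^Y_j:=\sigma_j(\tau_j^{-1}\eta_j+\lambda_j\epsilon^{-1}Y_j)$. The Bayes estimator is $\hat\theta^m:=\mathbb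 E[\vartheta^m|Y]$, i.e. $\hat\theta^m_j=\theta^Y_j$ for $j\le m$, $\hat\theta^m_j=\eta_j$ for $j>m$. Let $\Lambda_j:=\lambda_j^{-2}$, $\Lambda_{(m)}:=\max_{1\le j\le m}\Lambda_j$, $\bar\Lambda_m:=m^{-1}\sum_{j=1}^m\Lambda_j$. Let $G_\epsilon:=\max\{1\le m\le\lfloor\epsilon^{-1}\rfloor:\epsilon\Lambda_{(m)}\le\Lambda_1\}$. Assumption A: there is a constant $d>0$ such that $\tau_j\ge d\,(\epsilon^{1/2}\Lambda_j^{1/2}\vee\epsilon\Lambda_j)$ for all $1\le j\le G_\epsilon$ and all $\epsilon\in(0,1)$. Let $\mathfrak a=(\mathfrak a_j)_{j\ge1}$ be strictly positive, non-increasing, with $\mathfrak a_1=1$ and $\mathfrak a_j\to0$. For $r>0$ the ellipsoid is $\Theta^r_{\mathfrak a}:=\{\theta:\sum_{j\ge1}(\theta_j-\eta_j)^2/\mathfrak a_j\le r\}$. Minimax quantities: $m^*_\epsilon:=\min\{m\ge1:\mathfrak a_m\vee\epsilon m\bar\Lambda_m\le\mathfrak a_k\vee\epsilon k\bar\Lambda_k\text{ for all }k\ge1\}$ and $\Phi^*_\epsilon:=\mathfrak a_{m^*_\epsilon}\vee\epsilon m^*_\epsilon\bar\Lambda_{m^*_\epsilon}$. *)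

theory Defs
  imports "HOL-Probability.Probability"
begin

text \<open>Sequences are functions nat => real; only indices j >= 1 are used (index 0 is ignored).\<close>

definition std_gauss :: "real measure" where
  "std_gauss = density lborel (\<lambda>x. ennreal (std_normal_density x))"

definition noise_law :: "(nat \<Rightarrow> real) measure" where
  "noise_law = (\<Pi>\<^sub>M j\<in>(UNIV::nat set). std_gauss)"

definition Lam :: "(nat \<Rightarrow> real) \<Rightarrow> nat \<Rightarrow> real" where
  "Lam lam j = 1 / (lam j)\<^sup>2"

definition LamMax :: "(nat \<Rightarrow> real) \<Rightarrow> nat \<Rightarrow> real" where
  "LamMax lam m = Max ((Lam lam) ` {1..m})"

definition LamBar :: "(nat \<Rightarrow> real) \<Rightarrow> nat \<Rightarrow> real" where
  "LamBar lam m = (\<Sum>j=1..m. Lam lam j) / real m"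

definition Geps :: "(nat \<Rightarrow> real) \<Rightarrow> real \<Rightarrow> nat" where
  "Geps lam eps = Max {m. 1 \<le> m \<and> m \<le> nat \<lfloor>1 / eps\<rfloor> \<and> eps * LamMax lam m \<le> Lam lam 1}"

definition mstar :: "(nat \<Rightarrow> real) \<Rightarrow> (nat \<Rightarrow> real) \<Rightarrow> real \<Rightarrow> nat" where
  "mstar a lam eps = (LEAST m. 1 \<le> m \<and>
     (\<forall>k\<ge>1. max (a m) (eps * real m * LamBar lam m) \<le> max (a k) (eps * real k * LamBar lam k)))"

definition Phistar :: "(nat \<Rightarrow> real) \<Rightarrow> (nat \<Rightarrow> real) \<Rightarrow> real \<Rightarrow> real" where
  "Phistar a lam eps = max (a (mstar a lam eps)) (eps * real (mstar a lam eps) * LamBar lam (mstar a lam eps))"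

definition sig :: "(nat \<Rightarrow> real) \<Rightarrow> real \<Rightarrow> (nat \<Rightarrow> real) \<Rightarrow> nat \<Rightarrow> real" where
  "sig lam eps tau j = 1 / ((lam j)\<^sup>2 / eps + 1 / tau j)"

definition thetaY :: "(nat \<Rightarrow> real) \<Rightarrow> real \<Rightarrow> (nat \<Rightarrow> real) \<Rightarrow> (nat \<Rightarrow> real) \<Rightarrow> (nat \<Rightarrow> real) \<Rightarrow> nat \<Rightarrow> real" where
  "thetaY lam eps tau eta Y j = sig lam eps tau j * (eta j / tau j + lam j * Y j / eps)"

text \<open>Bayes estimator of the sieve prior with dimension m.\<close>
definition bayes_est :: "nat \<Rightarrow> (nat \<Rightarrow> real) \<Rightarrow> real \<Rightarrow> (nat \<Rightarrow> real) \<Rightarrow> (nat \<Rightarrow> real) \<Rightarrow> (nat \<Rightarrow> real) \<Rightarrow> nat \<Rightarrow> real" where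
  "bayes_est m lam eps tau eta Y j = (if j \<le> m then thetaY lam eps tau eta Y j else eta j)"

definition obs :: "(nat \<Rightarrow> real) \<Rightarrow> real \<Rightarrow> (nat \<Rightarrow> real) \<Rightarrow> (nat \<Rightarrow> real) \<Rightarrow> nat \<Rightarrow> real" where
  "obs lam eps theta xi j = lam j * theta j + sqrt eps * xi j"

definition risk :: "nat \<Rightarrow> (nat \<Rightarrow> real) \<Rightarrow> real \<Rightarrow> (nat \<Rightarrow> real) \<Rightarrow> (nat \<Rightarrow> real) \<Rightarrow> (nat \<Rightarrow> real) \<Rightarrow> ennreal" where
  "risk m lam eps tau eta theta = (\<integral>\<^sup>+ xi. (\<Sum>j. ennreal
      ((bayes_est m lam eps tau eta (obs lam eps theta xi) (Suc j) - theta (Suc j))\<^sup>2)) \<partial>noise_law)"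

definition ellipsoid :: "(nat \<Rightarrow> real) \<Rightarrow> (nat \<Rightarrow> real) \<Rightarrow> real \<Rightarrow> (nat \<Rightarrow> real) set" where
  "ellipsoid a eta r = {theta. summable (\<lambda>j. (theta (Suc j))\<^sup>2) \<and>
      (\<Sum>j. ennreal ((theta (Suc j) - eta (Suc j))\<^sup>2 / a (Suc j))) \<le> ennreal r}"

end

theory Submission
  imports Defs
begin

(* Coordinatewise, the error of the posterior mean is an affine function of a single standard
   Gaussian, so the risk is the sum of squared biases and variances. Inside the sieve the variance
   is at most eps Lam_j and, by Assumption A, the squared bias is at most (eps Lam_(m) / d^2)
   (theta_j - eta_j)^2; outside it the squared bias is at most a_m times the ellipsoid weight
   (theta_j - eta_j)^2 / a_j. Hence the risk is at most max (eps Lam_(m) / d^2) a_m * r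
   + eps m LamBar_m, and at m = m* each of these terms is bounded by Phi*. Assumption A is only
   available up to G_eps, but once Phi* drops below inf_j Lam_j (which happens for small eps
   because a_m -> 0), the inequality eps m* LamBar_m* <= Phi* forces m* <= G_eps. *)

lemma prob_space_std_gauss: "prob_space std_gauss"
  unfolding std_gauss_def by (rule prob_space_normal_density) simp

lemma measurable_noise_component: "(\<lambda>xi. xi j) \<in> measurable noise_law std_gauss"
  unfolding noise_law_def by (rule measurable_component_singleton) simp

lemma borel_measurable_noise_component[measurable]: "(\<lambda>xi. xi j) \<in> borel_measurable noise_law"
  using measurable_noise_component unfolding std_gauss_def by simp

lemma nn_integral_noise_component:
  assumes [measurable]: "f \<in> borel_measurable borel"
  shows "(\<integral>\<^sup>+ xi. f (xi j) \<partial>noise_law) = (\<integral>\<^sup>+ x. f x \<partial>std_gauss)"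
proof -
  have "distr noise_law std_gauss (\<lambda>xi. xi j) = std_gauss"
    unfolding noise_law_def by (rule distr_PiM_component) (auto simp: prob_space_std_gauss)
  then have "(\<integral>\<^sup>+ x. f x \<partial>std_gauss) = (\<integral>\<^sup>+ x. f x \<partial>distr noise_law std_gauss (\<lambda>xi. xi j))"
    by simp
  also have "\<dots> = (\<integral>\<^sup>+ xi. f (xi j) \<partial>noise_law)"
    by (rule nn_integral_distr[OF measurable_noise_component]) (simp add: std_gauss_def)
  finally show ?thesis ..
qed

lemma nn_integral_std_gauss_affine_square:
  fixes c s :: real
  shows "(\<integral>\<^sup>+ x. ennreal ((c + s * x)\<^sup>2) \<partial>std_gauss) = ennreal (c\<^sup>2 + s\<^sup>2)"
proof -
  \<comment> \<open>exponents in the shape \<open>2 * k\<close> and \<open>2 * k + 1\<close> expected by the Gaussian moment lemmas\<close>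
  have moments: "(\<lambda>x. std_normal_density x * (c + s * x)\<^sup>2) = (\<lambda>x.
      c\<^sup>2 * (std_normal_density x * x ^ (2*0)) + (2 * c * s) * (std_normal_density x * x ^ (2*0+1))
      + s\<^sup>2 * (std_normal_density x * x ^ (2*1)))"
    by (auto simp: power2_eq_square algebra_simps)
  have int: "integrable lborel (\<lambda>x. std_normal_density x * x ^ k)" for k
    by (rule integrable_std_normal_moment)
  have integrable: "integrable lborel (\<lambda>x. std_normal_density x * (c + s * x)\<^sup>2)"
    unfolding moments by (intro Bochner_Integration.integrable_add integrable_mult_right int)
  have "(\<integral>\<^sup>+ x. ennreal ((c + s * x)\<^sup>2) \<partial>std_gauss)
      = (\<integral>\<^sup>+ x. ennreal (std_normal_density x * (c + s * x)\<^sup>2) \<partial>lborel)"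
    unfolding std_gauss_def
    by (subst nn_integral_density) (auto simp: ennreal_mult normal_density_nonneg)
  also have "\<dots> = ennreal (\<integral>x. std_normal_density x * (c + s * x)\<^sup>2 \<partial>lborel)"
    by (rule nn_integral_eq_integral[OF integrable]) (simp add: normal_density_nonneg)
  also have "(\<integral>x. std_normal_density x * (c + s * x)\<^sup>2 \<partial>lborel) = c\<^sup>2 + s\<^sup>2"
    unfolding moments
    by (simp only: Bochner_Integration.integral_add Bochner_Integration.integrable_add
        integrable_mult_right integral_mult_right_zero int
        integral_std_normal_moment_even integral_std_normal_moment_odd) simp
  finally show ?thesis .
qed

lemma Lam_pos: "lam j \<noteq> 0 \<Longrightarrow> Lam lam j > 0"
  unfolding Lam_def by simp

lemma Lam_le_LamMax: "1 \<le> j \<Longrightarrow> j \<le> m \<Longrightarrow> Lam lam j \<le> LamMax lam m"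
  unfolding LamMax_def by (intro Max_ge) auto

lemma sum_Lam_eq_LamBar: "m \<ge> 1 \<Longrightarrow> (\<Sum>j=1..m. Lam lam j) = real m * LamBar lam m"
  unfolding LamBar_def by simp

lemma LamMax_le_LamBar:
  assumes "m \<ge> 1" and "\<forall>j\<ge>1. lam j \<noteq> 0"
  shows "LamMax lam m \<le> real m * LamBar lam m"
  unfolding LamMax_def sum_Lam_eq_LamBar[OF assms(1), symmetric] using assms
  by (subst Max_le_iff) (auto intro!: member_le_sum less_imp_le[OF Lam_pos])

lemma Lam_lower_bound:
  assumes "\<exists>B. \<forall>j\<ge>1. \<bar>lam j\<bar> \<le> B" and "\<forall>j\<ge>1. lam j \<noteq> 0"
  obtains L0 where "L0 > 0" and "\<forall>j\<ge>1. L0 \<le> Lam lam j"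
proof -
  obtain B where B: "\<forall>j\<ge>1. \<bar>lam j\<bar> \<le> B"
    using assms(1) by blast
  have B_pos: "B > 0"
    using B[rule_format, of 1] assms(2) by force
  have "1 / B\<^sup>2 \<le> Lam lam j" if "j \<ge> 1" for j
  proof -
    have "(lam j)\<^sup>2 \<le> B\<^sup>2"
      using B that B_pos abs_le_square_iff[of "lam j" B] by simp
    then show ?thesis
      unfolding Lam_def using assms(2) that B_pos by (intro divide_left_mono) auto
  qed
  then show ?thesis
    using that[of "1 / B\<^sup>2"] B_pos by simp
qed

lemma LamBar_ge:
  assumes "m \<ge> 1" and "\<forall>j\<ge>1. L0 \<le> Lam lam j"
  shows "L0 \<le> LamBar lam m"
proof -
  have "real m * L0 \<le> (\<Sum>j=1..m. Lam lam j)"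
    using sum_mono[of "{1..m}" "\<lambda>_. L0" "Lam lam"] assms(2) by simp
  then show ?thesis
    using sum_Lam_eq_LamBar[OF assms(1)] assms(1) by simp
qed

lemma sig_pos:
  assumes "eps > 0" "tau j > 0" "lam j \<noteq> 0"
  shows "sig lam eps tau j > 0"
  using assms unfolding sig_def by (simp add: add_pos_pos)

lemma sig_le_eps_Lam:
  assumes "eps > 0" "tau j > 0" "lam j \<noteq> 0"
  shows "sig lam eps tau j \<le> eps * Lam lam j"
proof -
  have "1 / ((lam j)\<^sup>2 / eps + 1 / tau j) \<le> 1 / ((lam j)\<^sup>2 / eps)"
    using assms by (intro divide_left_mono add_increasing2) (auto simp: add_pos_pos)
  then show ?thesis
    using assms unfolding sig_def Lam_def by simp
qed

lemma bayes_est_error: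
  assumes "j \<le> m" "eps > 0" "tau j > 0" "lam j \<noteq> 0"
  shows "bayes_est m lam eps tau eta (obs lam eps theta xi) j - theta j
    = sig lam eps tau j * (eta j - theta j) / tau j + sig lam eps tau j * lam j / sqrt eps * xi j"
proof -
  define sg where "sg = sig lam eps tau j"
  have "(lam j)\<^sup>2 / eps + 1 / tau j > 0"
    using assms by (simp add: add_pos_pos)
  then have sg_inv: "sg * ((lam j)\<^sup>2 / eps + 1 / tau j) = 1"
    unfolding sg_def sig_def by simp
  have sqrt_eps: "sqrt eps / eps = 1 / sqrt eps"
    using assms(2) by (simp add: field_simps)
  have "bayes_est m lam eps tau eta (obs lam eps theta xi) j - theta j
      = sg * ((lam j)\<^sup>2 / eps + 1 / tau j) * theta j - theta j
        + sg * (eta j - theta j) / tau j + sg * lam j * xi j * (sqrt eps / eps)"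
    using assms unfolding bayes_est_def thetaY_def obs_def sg_def[symmetric]
    by (simp add: field_simps power2_eq_square)
  then show ?thesis
    unfolding sg_inv sqrt_eps by (simp add: sg_def)
qed

definition coord_risk :: "nat \<Rightarrow> (nat \<Rightarrow> real) \<Rightarrow> real \<Rightarrow> (nat \<Rightarrow> real) \<Rightarrow> (nat \<Rightarrow> real)
    \<Rightarrow> (nat \<Rightarrow> real) \<Rightarrow> nat \<Rightarrow> real" where
  "coord_risk m lam eps tau eta theta j =
    (if j \<le> m then (sig lam eps tau j * (eta j - theta j) / tau j)\<^sup>2 + (sig lam eps tau j * lam j / sqrt eps)\<^sup>2
     else (eta j - theta j)\<^sup>2)"

lemma risk_eq_suminf_coord_risk:
  assumes "eps > 0" and "\<forall>j\<ge>1. tau j > 0" and "\<forall>j\<ge>1. lam j \<noteq> 0"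
  shows "risk m lam eps tau eta theta = (\<Sum>j. ennreal (coord_risk m lam eps tau eta theta (Suc j)))"
proof -
  define c where "c j = (if j \<le> m then sig lam eps tau j * (eta j - theta j) / tau j else eta j - theta j)" for j
  define s where "s j = (if j \<le> m then sig lam eps tau j * lam j / sqrt eps else 0)" for j
  have error: "bayes_est m lam eps tau eta (obs lam eps theta xi) (Suc j) - theta (Suc j)
      = c (Suc j) + s (Suc j) * xi (Suc j)" for xi j
    using assms bayes_est_error[of "Suc j" m eps tau lam eta theta xi]
    by (auto simp: c_def s_def bayes_est_def)
  have "risk m lam eps tau eta theta
      = (\<integral>\<^sup>+ xi. (\<Sum>j. ennreal ((c (Suc j) + s (Suc j) * xi (Suc j))\<^sup>2)) \<partial>noise_law)"
    unfolding risk_def error ..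
  also have "\<dots> = (\<Sum>j. \<integral>\<^sup>+ xi. ennreal ((c (Suc j) + s (Suc j) * xi (Suc j))\<^sup>2) \<partial>noise_law)"
    by (rule nn_integral_suminf) measurable
  also have "\<dots> = (\<Sum>j. ennreal ((c (Suc j))\<^sup>2 + (s (Suc j))\<^sup>2))"
  proof (rule suminf_cong)
    fix j
    show "(\<integral>\<^sup>+ xi. ennreal ((c (Suc j) + s (Suc j) * xi (Suc j))\<^sup>2) \<partial>noise_law)
        = ennreal ((c (Suc j))\<^sup>2 + (s (Suc j))\<^sup>2)"
      using nn_integral_noise_component[of "\<lambda>x. ennreal ((c (Suc j) + s (Suc j) * x)\<^sup>2)" "Suc j"]
      by (simp add: nn_integral_std_gauss_affine_square)
  qed
  also have "\<dots> = (\<Sum>j. ennreal (coord_risk m lam eps tau eta theta (Suc j)))"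
    by (intro suminf_cong arg_cong[where f=ennreal]) (simp add: c_def s_def coord_risk_def)
  finally show ?thesis .
qed

lemma coord_risk_le_in_sieve:
  assumes "j \<le> m" "eps > 0" "d > 0" "tau j > 0" "lam j \<noteq> 0"
    and "d * sqrt eps * sqrt (Lam lam j) \<le> tau j"
  shows "coord_risk m lam eps tau eta theta j \<le> eps * Lam lam j / d\<^sup>2 * (theta j - eta j)\<^sup>2 + eps * Lam lam j"
proof -
  define sg where "sg = sig lam eps tau j"
  define L where "L = Lam lam j"
  have L_pos: "L > 0" and L_lam: "L * (lam j)\<^sup>2 = 1"
    using assms(5) unfolding L_def Lam_def by simp_all
  have sg_pos: "sg > 0" and sg_le: "sg \<le> eps * L"
    unfolding sg_def L_def using sig_pos sig_le_eps_Lam assms by auto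
  have tau_sq: "d\<^sup>2 * eps * L \<le> (tau j)\<^sup>2"
  proof -
    have "(d * sqrt eps * sqrt L)\<^sup>2 \<le> (tau j)\<^sup>2"
      using assms L_pos unfolding L_def by (intro power_mono) auto
    then show ?thesis
      using assms(2) L_pos by (simp add: power_mult_distrib)
  qed
  have "(sg / tau j)\<^sup>2 \<le> (eps * L)\<^sup>2 / (tau j)\<^sup>2"
    using sg_pos sg_le by (simp add: power_divide divide_right_mono power_mono)
  also have "\<dots> \<le> (eps * L)\<^sup>2 / (d\<^sup>2 * eps * L)"
    using tau_sq assms L_pos by (intro divide_left_mono) auto
  also have "\<dots> = eps * L / d\<^sup>2"
    using assms L_pos by (simp add: power2_eq_square field_simps)
  finally have factor: "(sg / tau j)\<^sup>2 \<le> eps * L / d\<^sup>2" .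
  have "(sg * (eta j - theta j) / tau j)\<^sup>2 = (sg / tau j)\<^sup>2 * (theta j - eta j)\<^sup>2"
    by (simp add: power_mult_distrib power_divide power2_commute)
  also have "\<dots> \<le> eps * L / d\<^sup>2 * (theta j - eta j)\<^sup>2"
    using factor by (rule mult_right_mono) simp
  finally have bias_le: "(sg * (eta j - theta j) / tau j)\<^sup>2 \<le> eps * L / d\<^sup>2 * (theta j - eta j)\<^sup>2" .
  have "(sg * lam j / sqrt eps)\<^sup>2 = sg\<^sup>2 * (lam j)\<^sup>2 / eps"
    using assms(2) by (simp add: power_mult_distrib power_divide)
  also have "\<dots> \<le> (eps * L)\<^sup>2 * (lam j)\<^sup>2 / eps"
    using sg_pos sg_le assms(2) by (intro divide_right_mono mult_right_mono power_mono) auto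
  also have "\<dots> = eps * L"
    using assms(2) L_lam by (simp add: power2_eq_square)
  finally have variance_le: "(sg * lam j / sqrt eps)\<^sup>2 \<le> eps * L" .
  show ?thesis
    using bias_le variance_le assms(1) unfolding coord_risk_def sg_def L_def by simp
qed

lemma coord_risk_le_weighted:
  assumes "j \<ge> 1" "m \<ge> 1" "eps > 0" "d > 0" "tau j > 0" "lam j \<noteq> 0"
    and a_pos: "a j > 0" and a_le_one: "a j \<le> 1" and a_le: "m < j \<Longrightarrow> a j \<le> a m"
    and tau_ge: "j \<le> m \<Longrightarrow> d * sqrt eps * sqrt (Lam lam j) \<le> tau j"
  shows "coord_risk m lam eps tau eta theta j
    \<le> max (eps * LamMax lam m / d\<^sup>2) (a m) * ((theta j - eta j)\<^sup>2 / a j)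
       + (if j \<le> m then eps * Lam lam j else 0)"
proof -
  define C where "C = max (eps * LamMax lam m / d\<^sup>2) (a m)"
  define D where "D = (theta j - eta j)\<^sup>2 / a j"
  have dev_eq: "(theta j - eta j)\<^sup>2 = a j * D"
    unfolding D_def using a_pos by simp
  have D_nonneg: "D \<ge> 0"
    unfolding D_def using a_pos by simp
  show ?thesis
  proof (cases "j \<le> m")
    case True
    have "eps * Lam lam j / d\<^sup>2 \<le> C"
      unfolding C_def using Lam_le_LamMax[OF assms(1) True] assms(3,4)
      by (intro max.coboundedI1 divide_right_mono mult_left_mono) auto
    moreover have "(theta j - eta j)\<^sup>2 \<le> D"
      unfolding dev_eq using mult_left_le_one_le[OF D_nonneg _ a_le_one] a_pos by simp
    moreover have "eps * Lam lam j / d\<^sup>2 \<ge> 0"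
      using assms(3) Lam_pos[of lam j, OF assms(6)] by simp
    ultimately have "eps * Lam lam j / d\<^sup>2 * (theta j - eta j)\<^sup>2 \<le> C * D"
      by (intro mult_mono) auto
    then show ?thesis
      using coord_risk_le_in_sieve[of j m eps d tau lam eta theta, OF True assms(3-6) tau_ge[OF True]] True
      unfolding C_def D_def by simp
  next
    case False
    have "(eta j - theta j)\<^sup>2 \<le> C * D"
      unfolding power2_commute[of "eta j"] dev_eq C_def using a_le False D_nonneg
      by (intro mult_right_mono) auto
    then show ?thesis
      using False unfolding coord_risk_def C_def D_def by simp
  qed
qed

lemma risk_le_oracle_bound:
  assumes eps: "eps > 0" and d: "d > 0" and r: "r \<ge> 0" and m: "m \<ge> 1"
    and tau: "\<forall>j\<ge>1. tau j > 0" and lam: "\<forall>j\<ge>1. lam j \<noteq> 0"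
    and a_pos: "\<forall>j\<ge>1. a j > 0" and a_mono: "\<forall>j k. 1 \<le> j \<longrightarrow> j \<le> k \<longrightarrow> a k \<le> a j"
    and a_one: "a 1 = 1"
    and tau_ge: "\<forall>j. 1 \<le> j \<and> j \<le> m \<longrightarrow> d * sqrt eps * sqrt (Lam lam j) \<le> tau j"
    and theta: "theta \<in> ellipsoid a eta r"
  shows "risk m lam eps tau eta theta
    \<le> ennreal (max (eps * LamMax lam m / d\<^sup>2) (a m) * r + eps * real m * LamBar lam m)"
proof -
  define C where "C = max (eps * LamMax lam m / d\<^sup>2) (a m)"
  define D where "D j = (theta j - eta j)\<^sup>2 / a j" for j
  define e where "e j = (if j \<le> m then eps * Lam lam j else 0)" for j
  have C_nonneg: "C \<ge> 0"
    unfolding C_def using a_pos m by (simp add: le_max_iff_disj less_imp_le)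
  have D_nonneg: "D (Suc j) \<ge> 0" for j
    unfolding D_def using a_pos by (simp add: less_imp_le)
  have e_nonneg: "e (Suc j) \<ge> 0" for j
    unfolding e_def using eps Lam_pos[of lam "Suc j"] lam by simp
  have coord_le: "coord_risk m lam eps tau eta theta (Suc j) \<le> C * D (Suc j) + e (Suc j)" for j
    unfolding C_def D_def e_def
    using coord_risk_le_weighted[of "Suc j" m eps d tau lam a eta theta] assms a_mono[rule_format, of 1] a_mono[rule_format, of m]
    by simp
  have D_sum: "(\<Sum>j. ennreal (D (Suc j))) \<le> ennreal r"
    using theta unfolding ellipsoid_def D_def by (simp add: power2_commute)
  have e_sum_eq: "(\<Sum>j<m. e (Suc j)) = eps * real m * LamBar lam m"
    using sum_Lam_eq_LamBar[of m lam, OF m] by (simp add: e_def sum.atLeast1_atMost_eq flip: sum_distrib_left mult.assoc)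
  have e_sum: "(\<Sum>j. ennreal (e (Suc j))) = ennreal (eps * real m * LamBar lam m)"
  proof -
    have "(\<Sum>j. ennreal (e (Suc j))) = (\<Sum>j<m. ennreal (e (Suc j)))"
      by (rule suminf_finite) (auto simp: e_def)
    also have "\<dots> = ennreal (\<Sum>j<m. e (Suc j))"
      using e_nonneg by (intro sum_ennreal) auto
    finally show ?thesis
      unfolding e_sum_eq .
  qed
  have "risk m lam eps tau eta theta = (\<Sum>j. ennreal (coord_risk m lam eps tau eta theta (Suc j)))"
    using risk_eq_suminf_coord_risk eps tau lam by blast
  also have "\<dots> \<le> (\<Sum>j. ennreal C * ennreal (D (Suc j)) + ennreal (e (Suc j)))"
    using coord_le C_nonneg D_nonneg e_nonneg
    by (intro suminf_le summableI) (simp add: ennreal_leI flip: ennreal_plus ennreal_mult)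
  also have "\<dots> = ennreal C * (\<Sum>j. ennreal (D (Suc j))) + (\<Sum>j. ennreal (e (Suc j)))"
    by (simp add: suminf_add[symmetric])
  also have "\<dots> \<le> ennreal C * ennreal r + ennreal (eps * real m * LamBar lam m)"
    unfolding e_sum using D_sum by (intro add_mono mult_left_mono) auto
  also have "\<dots> = ennreal (C * r + eps * real m * LamBar lam m)"
    using C_nonneg r e_nonneg unfolding e_sum_eq[symmetric]
    by (simp add: ennreal_plus ennreal_mult sum_nonneg)
  finally show ?thesis
    unfolding C_def .
qed

lemma exists_minimizer_linear_growth:
  fixes f :: "nat \<Rightarrow> real"
  assumes "c > 0" and growth: "\<forall>k\<ge>1. c * real k \<le> f k"
  shows "\<exists>m\<ge>1. \<forall>k\<ge>1. f m \<le> f k"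
proof -
  define N where "N = nat \<lceil>f 1 / c\<rceil> + 1"
  have N: "N \<ge> 1"
    unfolding N_def by simp
  have "Min (f ` {1..N}) \<in> f ` {1..N}"
    using N by (intro Min_in) auto
  then obtain m where m: "m \<in> {1..N}" "f m = Min (f ` {1..N})"
    by auto
  have "f m \<le> f k" if "k \<ge> 1" for k
  proof (cases "k \<le> N")
    case True
    then show ?thesis
      using m that by simp
  next
    case False
    then have "f 1 / c < real k"
      using of_nat_ceiling[of "f 1 / c"] unfolding N_def by linarith
    then have "f 1 < c * real k"
      using \<open>c > 0\<close> by (simp add: field_simps)
    moreover have "f m \<le> f 1"
      using m N by simp
    ultimately show ?thesis
      using growth that by force
  qed
  then show ?thesis
    using m by auto
qed

lemma mstar_minimizes:
  assumes "eps > 0" and "L0 > 0" and "\<forall>j\<ge>1. L0 \<le> Lam lam j"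
  shows "1 \<le> mstar a lam eps"
    and "\<forall>k\<ge>1. Phistar a lam eps \<le> max (a k) (eps * real k * LamBar lam k)"
proof -
  define f where "f m = max (a m) (eps * real m * LamBar lam m)" for m
  have "\<forall>k\<ge>1. eps * L0 * real k \<le> f k"
  proof (intro allI impI)
    fix k :: nat
    assume "k \<ge> 1"
    then have "eps * L0 * real k \<le> eps * real k * LamBar lam k"
      using LamBar_ge[of k L0 lam] assms by (simp add: mult_left_mono mult.commute mult.left_commute)
    then show "eps * L0 * real k \<le> f k"
      unfolding f_def by simp
  qed
  then have "\<exists>m\<ge>1. \<forall>k\<ge>1. f m \<le> f k"
    using assms by (intro exists_minimizer_linear_growth) auto
  then have "1 \<le> mstar a lam eps \<and> (\<forall>k\<ge>1. f (mstar a lam eps) \<le> f k)"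
    unfolding mstar_def f_def by (rule LeastI_ex)
  then show "1 \<le> mstar a lam eps" and "\<forall>k\<ge>1. Phistar a lam eps \<le> max (a k) (eps * real k * LamBar lam k)"
    unfolding Phistar_def f_def by auto
qed

lemma mstar_le_Geps:
  assumes "eps > 0" and "L0 > 0" and L0: "\<forall>j\<ge>1. L0 \<le> Lam lam j" and "\<forall>j\<ge>1. lam j \<noteq> 0"
    and Phistar_le: "Phistar a lam eps \<le> L0"
  shows "mstar a lam eps \<le> Geps lam eps"
proof -
  define m where "m = mstar a lam eps"
  have m: "m \<ge> 1"
    unfolding m_def using mstar_minimizes(1) assms(1-3) .
  have variance_le: "eps * real m * LamBar lam m \<le> L0"
    using Phistar_le unfolding Phistar_def m_def[symmetric] by simp
  have "eps * real m * L0 \<le> eps * real m * LamBar lam m"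
    using LamBar_ge[OF m L0] assms(1) by (simp add: mult_left_mono)
  then have "eps * real m * L0 \<le> 1 * L0"
    using variance_le by simp
  then have "eps * real m \<le> 1"
    using assms(2) by (rule mult_right_le_imp_le)
  then have "real m \<le> 1 / eps"
    using assms(1) by (simp add: field_simps)
  then have "m \<le> nat \<lfloor>1 / eps\<rfloor>"
    by (rule le_nat_floor)
  moreover have "eps * LamMax lam m \<le> Lam lam 1"
  proof -
    have "eps * LamMax lam m \<le> eps * (real m * LamBar lam m)"
      using LamMax_le_LamBar[OF m assms(4)] assms(1) by (simp add: mult_left_mono)
    also have "\<dots> \<le> L0"
      using variance_le by (simp add: mult.assoc)
    also have "\<dots> \<le> Lam lam 1"
      using L0 by simp
    finally show ?thesis .
  qed
  ultimately show ?thesis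
    unfolding Geps_def m_def[symmetric] using m
    by (intro Max_ge) (auto intro: finite_subset[of _ "{..nat \<lfloor>1 / eps\<rfloor>}"])
qed

lemma Phistar_le_for_small_eps:
  assumes "L0 > 0" and L0: "\<forall>j\<ge>1. L0 \<le> Lam lam j" and "a \<longlonglongrightarrow> 0"
  obtains eo where "0 < eo" "eo < 1" "\<forall>eps. 0 < eps \<and> eps < eo \<longrightarrow> Phistar a lam eps \<le> L0"
proof -
  have "\<forall>\<^sub>F k in sequentially. a k < L0"
    using assms(3,1) by (rule order_tendstoD(2))
  then obtain N where "\<forall>k\<ge>N. a k < L0"
    unfolding eventually_sequentially by blast
  define K where "K = Suc N"
  have K: "K \<ge> 1" "a K \<le> L0"
    unfolding K_def using \<open>\<forall>k\<ge>N. a k < L0\<close> by (simp_all add: less_imp_le)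
  define V where "V = real K * LamBar lam K"
  have V_pos: "V > 0"
    unfolding V_def using K(1) LamBar_ge[OF K(1) L0] assms(1) by simp
  define eo where "eo = min (1/2) (L0 / V)"
  show thesis
  proof (rule that)
    show "0 < eo" and "eo < 1"
      unfolding eo_def using assms(1) V_pos by auto
    show "\<forall>eps. 0 < eps \<and> eps < eo \<longrightarrow> Phistar a lam eps \<le> L0"
    proof (intro allI impI)
      fix eps :: real
      assume eps: "0 < eps \<and> eps < eo"
      then have "eps * V \<le> L0"
        unfolding eo_def using V_pos by (simp add: field_simps)
      moreover have "Phistar a lam eps \<le> max (a K) (eps * V)"
        using mstar_minimizes(2)[OF _ assms(1) L0] eps K(1) unfolding V_def by (simp add: mult.assoc)
      ultimately show "Phistar a lam eps \<le> L0"
        using K(2) by linarith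
    qed
  qed
qed

lemma oracle_bound_le:
  fixes x y v P d r :: real
  assumes "d > 0" "r > 0" "x \<le> P" "0 \<le> y" "y \<le> P" "v \<le> P"
  shows "max (x / d\<^sup>2) y * r + v \<le> (2 + r / d\<^sup>2) * max 1 r * P"
proof -
  have P: "P \<ge> 0"
    using assms by linarith
  have "x / d\<^sup>2 \<le> P / d\<^sup>2"
    using assms by (simp add: divide_right_mono)
  moreover have "0 \<le> P / d\<^sup>2"
    using P by simp
  ultimately have "max (x / d\<^sup>2) y \<le> P / d\<^sup>2 + P"
    using assms P by (intro max.boundedI) linarith+
  then have "max (x / d\<^sup>2) y * r + v \<le> (P / d\<^sup>2 + P) * r + P"
    using assms by (intro add_mono mult_right_mono) auto
  also have "\<dots> = (r / d\<^sup>2 + r + 1) * P"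
    by (simp add: algebra_simps)
  also have "\<dots> \<le> (2 + r / d\<^sup>2) * max 1 r * P"
  proof (rule mult_right_mono[OF _ P])
    show "r / d\<^sup>2 + r + 1 \<le> (2 + r / d\<^sup>2) * max 1 r"
    proof (cases "r \<le> 1")
      case True
      then show ?thesis
        by (simp add: max_def)
    next
      case False
      then have "r / d\<^sup>2 \<le> r / d\<^sup>2 * r"
        using mult_left_mono[of 1 r "r / d\<^sup>2"] assms by simp
      then show ?thesis
        using False by (simp add: max_def algebra_simps)
    qed
  qed
  finally show ?thesis .
qed

lemma oracle_bound_mstar_le_Phistar:
  fixes a lam :: "nat \<Rightarrow> real" and eps d r :: real
  defines "m \<equiv> mstar a lam eps"
  assumes d: "d > 0" and r: "r > 0" and m: "m \<ge> 1" and "eps > 0"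
    and lam: "\<forall>j\<ge>1. lam j \<noteq> 0" and a_pos: "\<forall>j\<ge>1. a j > 0"
  shows "max (eps * LamMax lam m / d\<^sup>2) (a m) * r + eps * real m * LamBar lam m
    \<le> (2 + r / d\<^sup>2) * max 1 r * Phistar a lam eps"
proof (rule oracle_bound_le[OF d r])
  have "eps * LamMax lam m \<le> eps * (real m * LamBar lam m)"
    using LamMax_le_LamBar[OF m lam] \<open>eps > 0\<close> by (simp add: mult_left_mono)
  then show "eps * LamMax lam m \<le> Phistar a lam eps"
    unfolding Phistar_def m_def[symmetric] by (simp add: mult.assoc)
  show "0 \<le> a m" "a m \<le> Phistar a lam eps" "eps * real m * LamBar lam m \<le> Phistar a lam eps"
    unfolding Phistar_def m_def[symmetric] using a_pos m by (auto simp: less_imp_le)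
qed

theorem mainTheorem9:
  fixes lam a :: "nat \<Rightarrow> real"
  assumes lam_bdd: "\<exists>B. \<forall>j\<ge>1. \<bar>lam j\<bar> \<le> B"
    and lam_nz: "\<forall>j\<ge>1. lam j \<noteq> 0"
    and a_pos: "\<forall>j\<ge>1. a j > 0"
    and a_mono: "\<forall>j k. 1 \<le> j \<longrightarrow> j \<le> k \<longrightarrow> a k \<le> a j"
    and a_one: "a 1 = 1"
    and a_lim: "a \<longlonglongrightarrow> 0"
  shows "\<exists>eo. 0 < eo \<and> eo < 1 \<and>
    (\<forall>(d::real) (r::real) (eta::nat \<Rightarrow> real) (tau::real \<Rightarrow> nat \<Rightarrow> real).
       d > 0 \<longrightarrow> r > 0 \<longrightarrow>
       (\<forall>eps. 0 < eps \<and> eps < 1 \<longrightarrow> (\<forall>j\<ge>1. tau eps j > 0)) \<longrightarrow>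
       (\<forall>eps. 0 < eps \<and> eps < 1 \<longrightarrow> (\<forall>j. 1 \<le> j \<and> j \<le> Geps lam eps \<longrightarrow>
           tau eps j \<ge> d * max (sqrt eps * sqrt (Lam lam j)) (eps * Lam lam j))) \<longrightarrow>
       (\<forall>eps. 0 < eps \<and> eps < eo \<longrightarrow>
          (\<forall>theta \<in> ellipsoid a eta r.
             risk (mstar a lam eps) lam eps (tau eps) eta theta
               \<le> ennreal ((2 + r / d\<^sup>2) * max 1 r * Phistar a lam eps))))"
proof -
  obtain L0 where L0_pos: "L0 > 0" and L0: "\<forall>j\<ge>1. L0 \<le> Lam lam j"
    using Lam_lower_bound[OF lam_bdd lam_nz] .
  obtain eo where eo: "0 < eo" "eo < 1" and Phistar_le: "\<forall>eps. 0 < eps \<and> eps < eo \<longrightarrow> Phistar a lam eps \<le> L0"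
    using Phistar_le_for_small_eps[OF L0_pos L0 a_lim] .
  show ?thesis
  proof (intro exI[of _ eo] conjI eo allI impI ballI)
    fix d r :: real and eta theta :: "nat \<Rightarrow> real" and tau :: "real \<Rightarrow> nat \<Rightarrow> real" and eps :: real
    assume d: "d > 0" and r: "r > 0"
      and tau_pos: "\<forall>eps. 0 < eps \<and> eps < 1 \<longrightarrow> (\<forall>j\<ge>1. tau eps j > 0)"
      and tau_ge: "\<forall>eps. 0 < eps \<and> eps < 1 \<longrightarrow> (\<forall>j. 1 \<le> j \<and> j \<le> Geps lam eps \<longrightarrow>
           tau eps j \<ge> d * max (sqrt eps * sqrt (Lam lam j)) (eps * Lam lam j))"
      and eps: "0 < eps \<and> eps < eo" and theta: "theta \<in> ellipsoid a eta r"
    define m where "m = mstar a lam eps"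
    have m: "m \<ge> 1"
      unfolding m_def using mstar_minimizes(1)[OF _ L0_pos L0] eps by simp
    have "m \<le> Geps lam eps"
      unfolding m_def using mstar_le_Geps[OF _ L0_pos L0 lam_nz] eps Phistar_le by simp
    have "\<forall>j. 1 \<le> j \<and> j \<le> m \<longrightarrow> d * sqrt eps * sqrt (Lam lam j) \<le> tau eps j"
    proof (intro allI impI)
      fix j
      assume "1 \<le> j \<and> j \<le> m"
      then have "d * max (sqrt eps * sqrt (Lam lam j)) (eps * Lam lam j) \<le> tau eps j"
        using tau_ge eps eo \<open>m \<le> Geps lam eps\<close> by auto
      moreover have "d * (sqrt eps * sqrt (Lam lam j)) \<le> d * max (sqrt eps * sqrt (Lam lam j)) (eps * Lam lam j)"
        using d by (intro mult_left_mono) auto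
      ultimately show "d * sqrt eps * sqrt (Lam lam j) \<le> tau eps j"
        by (simp add: mult.assoc)
    qed
    then have "risk m lam eps (tau eps) eta theta
        \<le> ennreal (max (eps * LamMax lam m / d\<^sup>2) (a m) * r + eps * real m * LamBar lam m)"
      using risk_le_oracle_bound[OF _ d _ m _ lam_nz a_pos a_mono a_one _ theta] tau_pos eps eo r by auto
    also have "\<dots> \<le> ennreal ((2 + r / d\<^sup>2) * max 1 r * Phistar a lam eps)"
      unfolding m_def using oracle_bound_mstar_le_Phistar[OF d r _ _ lam_nz a_pos] m eps
      by (simp add: m_def ennreal_leI)
    finally show "risk (mstar a lam eps) lam eps (tau eps) eta theta
        \<le> ennreal ((2 + r / d\<^sup>2) * max 1 r * Phistar a lam eps)"
      unfolding m_def .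
  qed
qed

end
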